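(* Let $p=(p_1,\dots,p_n)\in[0,1]^n$ and $y=y_1\cdots y_m\in\{0,1\}^m$ with $n\ge m>0$, and let $i\in\{1,\dots,n\}$. Then $$\mathbf F(p,y)=\mathbf F(p_{[n]\setminus\{i\}},y)+p_i\sum_{k:\,y_k=1}\mathbf F(p_{[1:i-1]},y_{[1:k-1]})\,\mathbf F(p_{[i+1:n]},y_{[k+1:m]})+(1-p_i)\sum_{k:\,y_k=0}\mathbf F(p_{[1:i-1]},y_{[1:k-1]})\,\mathbf F(p_{[i+1:n]},y_{[k+1:m]}).$$
   Context: For integers $a,b$, $[a:b]=\{a,a+1,\dots,b\}$ if $b\ge a$ and $\emptyset$ otherwise; $[a]=[1:a]$. For a vector $p$ and index set $T$, $p_T$ is the subvector of $p$ with coordinates in $T$ (in increasing order), and similarly $y_T$ for sequences; $y_{[1:0]}$ and $y_{[m+1:m]}$ are the empty sequence. The relaxed binomial coefficient $\mathbf F:[0,1]^n\times\{0,1\}^m\to\mathbb R$ is defined by: if $1\le m\le n$, $\mathbf F(p,v)=\sum_{S\subseteq[n],|S|=m}\prod_{j=1}^m p_{S_j}^{v_j}(1-p_{S_j})^{1-v_j}$, where $S_1<\dots<S_m$ are the elements of $S$; if $m=0\le n$ (including $n=0$), $\mathbf F(p,v)=1$; otherwise ($m>n$) $\mathbf F(p,v)=0$. Equivalently $\mathbf F(p,v)$ is the expected number of occurrences of $v$ as a subsequence of a random $Z\in\{0,1\}^n$ with independent $Z_i\sim\mathrm{Bernoulli}(p_i)$. *)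

theory Defs
  imports Complex_Main
begin

text \<open>Vectors p are real lists (positions 0..n-1 stand
for 1..n), binary words v are nat lists with entries in {0,1}.\<close>

definition relaxed_binom :: "real list \<Rightarrow> nat list \<Rightarrow> real" where
  "relaxed_binom p v =
     (let n = length p; m = length v in
      if 1 \<le> m \<and> m \<le> n then
        (\<Sum>S\<in>{S. S \<subseteq> {0..<n} \<and> card S = m}.
           \<Prod>j<m. (p ! (sorted_list_of_set S ! j)) ^ (v ! j)
                  * (1 - p ! (sorted_list_of_set S ! j)) ^ (1 - v ! j))
      else if m = 0 then 1 else 0)"

end

theory Submission imports Defs begin

text \<open>Every occurrence of y as a subsequence of p either avoids position i or matches exactly
  one letter y_k to p_i, and then the letters before and after y_k are matched inside the parts
  of p before and after position i. Formally this follows by induction on the prefix before p_i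
  from the first-letter recurrence F(a p, b v) = F(p, b v) + a^b (1-a)^(1-b) F(p, v), which comes
  from splitting the index sets by whether they contain the first position. The identity is
  polynomial in p.\<close>

definition bernoulli_weight :: "real \<Rightarrow> nat \<Rightarrow> real" where
  "bernoulli_weight a b = a ^ b * (1 - a) ^ (1 - b)"

definition index_subsets :: "nat \<Rightarrow> nat \<Rightarrow> nat set set" where
  "index_subsets n m = {S. S \<subseteq> {0..<n} \<and> card S = m}"

definition embedding_weight :: "real list \<Rightarrow> nat list \<Rightarrow> nat set \<Rightarrow> real" where
  "embedding_weight p v S =
     (\<Prod>j<length v. bernoulli_weight (p ! (sorted_list_of_set S ! j)) (v ! j))"

lemma sum_bernoulli_weight_split:
  assumes "finite K" and "\<forall>k\<in>K. b k \<in> {0, 1}"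
  shows "(\<Sum>k\<in>K. bernoulli_weight a (b k) * f k)
    = a * (\<Sum>k\<in>{k\<in>K. b k = 1}. f k) + (1 - a) * (\<Sum>k\<in>{k\<in>K. b k = 0}. f k)"
proof -
  have "(\<Sum>k\<in>K. bernoulli_weight a (b k) * f k)
      = (\<Sum>k\<in>K. if b k = 1 then a * f k else 0) + (\<Sum>k\<in>K. if b k = 0 then (1 - a) * f k else 0)"
    unfolding sum.distrib[symmetric] using assms(2)
    by (intro sum.cong refl) (auto simp: bernoulli_weight_def)
  also have "\<dots> = a * (\<Sum>k\<in>{k\<in>K. b k = 1}. f k) + (1 - a) * (\<Sum>k\<in>{k\<in>K. b k = 0}. f k)"
    by (simp only: sum_distrib_left sum.inter_filter[OF assms(1)] if_distrib[of "(*) _"]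
        mult_zero_right)
  finally show ?thesis .
qed

lemma finite_index_subsets: "finite (index_subsets n m)"
  unfolding index_subsets_def by (rule finite_subset[of _ "Pow {0..<n}"]) auto

lemma finite_member_index_subsets: "S \<in> index_subsets n m \<Longrightarrow> finite S"
  unfolding index_subsets_def by (auto intro: finite_subset)

lemma index_subsets_Suc_Suc:
  "index_subsets (Suc n) (Suc m) =
     (\<lambda>S. Suc ` S) ` index_subsets n (Suc m) \<union> (\<lambda>S. insert 0 (Suc ` S)) ` index_subsets n m"
proof (intro set_eqI iffI)
  fix T assume T: "T \<in> index_subsets (Suc n) (Suc m)"
  define S where "S = {x. Suc x \<in> T}"
  have "finite T" using T by (rule finite_member_index_subsets)
  have T_minus_0: "T - {0} = Suc ` S"
    unfolding S_def by (auto simp: image_iff) (metis not0_implies_Suc)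
  have S_sub: "S \<subseteq> {0..<n}" using T unfolding S_def index_subsets_def by auto
  have card_S: "card S = card (T - {0})" unfolding T_minus_0 by (simp add: card_image)
  show "T \<in> (\<lambda>S. Suc ` S) ` index_subsets n (Suc m) \<union> (\<lambda>S. insert 0 (Suc ` S)) ` index_subsets n m"
  proof (cases "0 \<in> T")
    case True
    then have "T = insert 0 (Suc ` S)" using T_minus_0 by blast
    moreover have "card S = m"
      using card_S True T \<open>finite T\<close> by (simp add: index_subsets_def card_Diff_singleton)
    ultimately show ?thesis using S_sub unfolding index_subsets_def by blast
  next
    case False
    then have "T = Suc ` S" using T_minus_0 by blast
    moreover have "card S = Suc m" using card_S False T by (simp add: index_subsets_def)
    ultimately show ?thesis using S_sub unfolding index_subsets_def by blast
  qed
next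
  fix T assume "T \<in> (\<lambda>S. Suc ` S) ` index_subsets n (Suc m) \<union> (\<lambda>S. insert 0 (Suc ` S)) ` index_subsets n m"
  then show "T \<in> index_subsets (Suc n) (Suc m)"
    by (auto simp: index_subsets_def card_image dest: finite_subset[OF _ finite_atLeastLessThan])
qed

lemma relaxed_binom_eq_sum_index_subsets:
  "relaxed_binom p v = (\<Sum>S\<in>index_subsets (length p) (length v). embedding_weight p v S)"
proof -
  have "index_subsets n m = {}" if "n < m" for n m
    using that unfolding index_subsets_def by (auto dest: card_mono[OF finite_atLeastLessThan])
  moreover have "index_subsets n 0 = {{}}" for n
    unfolding index_subsets_def by (auto dest: finite_subset[OF _ finite_atLeastLessThan])
  ultimately show ?thesis
    unfolding relaxed_binom_def Let_def embedding_weight_def bernoulli_weight_def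
      index_subsets_def[symmetric]
    by (auto simp: not_le)
qed

lemma relaxed_binom_Nil_right [simp]: "relaxed_binom p [] = 1"
  by (simp add: relaxed_binom_def)

lemma relaxed_binom_Nil_Cons [simp]: "relaxed_binom [] (b # v) = 0"
  by (simp add: relaxed_binom_def)

lemma sorted_list_of_set_image_Suc:
  "finite S \<Longrightarrow> sorted_list_of_set (Suc ` S) = map Suc (sorted_list_of_set S)"
  by (subst sorted_list_of_set_unique[symmetric]) (auto simp: sorted_wrt_map card_image)

lemma sorted_list_of_set_insert_0_image_Suc:
  "finite S \<Longrightarrow> sorted_list_of_set (insert 0 (Suc ` S)) = 0 # map Suc (sorted_list_of_set S)"
  by (subst sorted_list_of_set_unique[symmetric]) (auto simp: sorted_wrt_map card_image)

lemma relaxed_binom_Cons_Cons: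
  "relaxed_binom (a # p) (b # v) = relaxed_binom p (b # v) + bernoulli_weight a b * relaxed_binom p v"
proof -
  let ?n = "length p" and ?m = "length v"
  have inj_Suc: "inj_on (\<lambda>S. Suc ` S) (index_subsets ?n (Suc ?m))"
    by (rule inj_onI) (simp add: inj_image_eq_iff)
  have inj_insert_0: "inj_on (\<lambda>S. insert 0 (Suc ` S)) (index_subsets ?n ?m)"
  proof (rule inj_onI)
    fix S T assume "insert 0 (Suc ` S) = insert 0 (Suc ` T)"
    then have "Suc ` S = Suc ` T" by (metis Diff_insert_absorb imageE nat.distinct(1))
    then show "S = T" by (simp add: inj_image_eq_iff)
  qed
  have weight_Suc: "embedding_weight (a # p) (b # v) (Suc ` S) = embedding_weight p (b # v) S"
    if "S \<in> index_subsets ?n (Suc ?m)" for S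
  proof -
    have "finite S" using that by (rule finite_member_index_subsets)
    moreover have "card S = Suc ?m" using that by (simp add: index_subsets_def)
    ultimately show ?thesis
      unfolding embedding_weight_def sorted_list_of_set_image_Suc[OF \<open>finite S\<close>]
      by (intro prod.cong) simp_all
  qed
  have weight_insert_0: "embedding_weight (a # p) (b # v) (insert 0 (Suc ` S))
      = bernoulli_weight a b * embedding_weight p v S"
    if "S \<in> index_subsets ?n ?m" for S
  proof -
    have "finite S" using that by (rule finite_member_index_subsets)
    moreover have "card S = ?m" using that by (simp add: index_subsets_def)
    ultimately show ?thesis
      unfolding embedding_weight_def sorted_list_of_set_insert_0_image_Suc[OF \<open>finite S\<close>]
        length_Cons prod.lessThan_Suc_shift
      by (intro arg_cong2[where f = "(*)"] prod.cong) simp_all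
  qed
  have disjoint: "(\<lambda>S. Suc ` S) ` index_subsets ?n (Suc ?m)
      \<inter> (\<lambda>S. insert 0 (Suc ` S)) ` index_subsets ?n ?m = {}"
    by auto
  have "relaxed_binom (a # p) (b # v)
      = (\<Sum>S\<in>(\<lambda>S. Suc ` S) ` index_subsets ?n (Suc ?m). embedding_weight (a # p) (b # v) S)
      + (\<Sum>S\<in>(\<lambda>S. insert 0 (Suc ` S)) ` index_subsets ?n ?m. embedding_weight (a # p) (b # v) S)"
    unfolding relaxed_binom_eq_sum_index_subsets length_Cons index_subsets_Suc_Suc
    using disjoint by (intro sum.union_disjoint finite_imageI finite_index_subsets)
  also have "\<dots> = relaxed_binom p (b # v) + bernoulli_weight a b * relaxed_binom p v"
    unfolding relaxed_binom_eq_sum_index_subsets sum.reindex[OF inj_Suc] sum.reindex[OF inj_insert_0]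
    by (simp add: weight_Suc weight_insert_0 sum_distrib_left)
  finally show ?thesis .
qed

lemma relaxed_binom_append_Cons:
  "relaxed_binom (q @ a # r) y = relaxed_binom (q @ r) y
     + (\<Sum>k<length y. bernoulli_weight a (y ! k)
          * relaxed_binom q (take k y) * relaxed_binom r (drop (Suc k) y))"
proof (induction q arbitrary: y)
  case Nil
  show ?case
  proof (cases y)
    case (Cons b v)
    then show ?thesis
      by (simp only: length_Cons sum.lessThan_Suc_shift) (simp add: relaxed_binom_Cons_Cons)
  qed simp
next
  case (Cons c q)
  show ?case
  proof (cases y)
    case (Cons b v)
    have "relaxed_binom ((c # q) @ a # r) y
        = relaxed_binom (q @ a # r) (b # v) + bernoulli_weight c b * relaxed_binom (q @ a # r) v"
      using Cons by (simp add: relaxed_binom_Cons_Cons)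
    also have "\<dots> = relaxed_binom (q @ r) (b # v)
        + (\<Sum>k<length (b # v). bernoulli_weight a ((b # v) ! k)
             * relaxed_binom q (take k (b # v)) * relaxed_binom r (drop (Suc k) (b # v)))
        + bernoulli_weight c b * (relaxed_binom (q @ r) v
        + (\<Sum>k<length v. bernoulli_weight a (v ! k)
             * relaxed_binom q (take k v) * relaxed_binom r (drop (Suc k) v)))"
      by (simp only: Cons.IH)
    also have "\<dots> = relaxed_binom ((c # q) @ r) y
        + (\<Sum>k<length y. bernoulli_weight a (y ! k)
             * relaxed_binom (c # q) (take k y) * relaxed_binom r (drop (Suc k) y))"
      using Cons
      by (simp only: length_Cons sum.lessThan_Suc_shift)
         (simp add: relaxed_binom_Cons_Cons algebra_simps sum.distrib sum_distrib_left)
    finally show ?thesis .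
  qed simp
qed

theorem lemma1:
  fixes p :: "real list" and y :: "nat list" and i :: nat
  assumes "\<forall>x\<in>set p. 0 \<le> x \<and> x \<le> 1"
    and "set y \<subseteq> {0, 1}"
    and "length p \<ge> length y" and "length y > 0"
    and "1 \<le> i" and "i \<le> length p"
  shows "relaxed_binom p y =
           relaxed_binom (take (i - 1) p @ drop i p) y
         + p ! (i - 1) * (\<Sum>k\<in>{k\<in>{1..length y}. y ! (k - 1) = 1}.
               relaxed_binom (take (i - 1) p) (take (k - 1) y)
             * relaxed_binom (drop i p) (drop k y))
         + (1 - p ! (i - 1)) * (\<Sum>k\<in>{k\<in>{1..length y}. y ! (k - 1) = 0}.
               relaxed_binom (take (i - 1) p) (take (k - 1) y)
             * relaxed_binom (drop i p) (drop k y))"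
proof -
  let ?a = "p ! (i - 1)"
  define h where "h k = relaxed_binom (take (i - 1) p) (take (k - 1) y)
    * relaxed_binom (drop i p) (drop k y)" for k
  have p_split: "take (i - 1) p @ ?a # drop i p = p"
    using id_take_nth_drop[of "i - 1" p] assms(5,6) by simp
  have "relaxed_binom p y = relaxed_binom (take (i - 1) p @ drop i p) y
      + (\<Sum>k\<in>{1..length y}. bernoulli_weight ?a (y ! (k - 1)) * h k)"
    using relaxed_binom_append_Cons[of "take (i - 1) p" ?a "drop i p" y]
    unfolding p_split by (simp add: sum.atLeast1_atMost_eq h_def mult.assoc)
  moreover have "\<forall>k\<in>{1..length y}. y ! (k - 1) \<in> {0, 1}"
    by (intro ballI subsetD[OF assms(2)] nth_mem) auto
  ultimately show ?thesis
    by (simp only: sum_bernoulli_weight_split[OF finite_atLeastAtMost] h_def add.assoc)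
qed

end
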